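(* Let $\mathcal C$ be an additive category and $\mathbb E\colon\mathcal C^{\mathrm{op}}\times\mathcal C\to\mathsf{Ab}$ a biadditive functor. Let $\alpha\in\mathbb E(C,A)$ and let $(e_A,e_C)\in\mathrm{End}_{\mathbb E\text{-}\mathrm{Ext}(\mathcal C)}(\alpha)$ be an idempotent. Then $e_A$ and $e_C$ split in $\mathcal C$ if and only if $(e_A,e_C)$ splits in $\mathbb E\text{-}\mathrm{Ext}(\mathcal C)$. In particular, if $\mathcal C$ is idempotent complete then so is $\mathbb E\text{-}\mathrm{Ext}(\mathcal C)$.
   Context: An idempotent $e\colon X\to X$ splits if there are $r\colon X\to Y$, $s\colon Y\to X$ with $sr=e$, $rs=1_Y$; a category is idempotent complete if every idempotent splits. Write $a_*\alpha=\mathbb E(C,a)(\alpha)$ and $c^*\beta=\mathbb E(c,A)(\beta)$. The category of extensions $\mathbb E\text{-}\mathrm{Ext}(\mathcal C)$ has as objects all elements $\alpha\in\mathbb E(C,A)$ for $A,C\in\mathcal C$; a morphism from $\alpha\in\mathbb E(C,A)$ to $\beta\in\mathbb E(D,B)$ is a pair $(a,c)$ of morphisms $a\colon A\to B$, $c\colon C\to D$ in $\mathcal C$ with $a_*\alpha=c^*\beta$; composition is componentwise and the identity of $\alpha$ is $(1_A,1_C)$. (A morphism $(e_A,e_C)\colon\alpha\to\alpha$ is idempotent iff $e_A$ and $e_C$ are idempotents in $\mathcal C$.) *)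

theory Defs
  imports Main
begin

record ('o,'m) addcat =
  Ob  :: "'o set"
  Hom :: "'o \<Rightarrow> 'o \<Rightarrow> 'm set"
  cmp :: "'o \<Rightarrow> 'o \<Rightarrow> 'o \<Rightarrow> 'm \<Rightarrow> 'm \<Rightarrow> 'm"
    (* cmp X Y Z g f = g \<circ> f  for f : X \<rightarrow> Y, g : Y \<rightarrow> Z *)
  idt :: "'o \<Rightarrow> 'm"
  zro :: "'o \<Rightarrow> 'o \<Rightarrow> 'm"
  pls :: "'o \<Rightarrow> 'o \<Rightarrow> 'm \<Rightarrow> 'm \<Rightarrow> 'm"
  ngt :: "'o \<Rightarrow> 'o \<Rightarrow> 'm \<Rightarrow> 'm"

definition ab_grp :: "'a set \<Rightarrow> 'a \<Rightarrow> ('a \<Rightarrow> 'a \<Rightarrow> 'a) \<Rightarrow> ('a \<Rightarrow> 'a) \<Rightarrow> bool" where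
  "ab_grp G z p n \<longleftrightarrow>
     z \<in> G \<and> (\<forall>x\<in>G. \<forall>y\<in>G. p x y \<in> G) \<and> (\<forall>x\<in>G. n x \<in> G) \<and>
     (\<forall>x\<in>G. \<forall>y\<in>G. \<forall>w\<in>G. p (p x y) w = p x (p y w)) \<and>
     (\<forall>x\<in>G. \<forall>y\<in>G. p x y = p y x) \<and>
     (\<forall>x\<in>G. p z x = x) \<and> (\<forall>x\<in>G. p (n x) x = z)"

definition is_category :: "('o,'m,'x) addcat_scheme \<Rightarrow> bool" where
  "is_category K \<longleftrightarrow>
     (\<forall>X\<in>Ob K. idt K X \<in> Hom K X X) \<and>
     (\<forall>X\<in>Ob K. \<forall>Y\<in>Ob K. \<forall>Z\<in>Ob K. \<forall>f\<in>Hom K X Y. \<forall>g\<in>Hom K Y Z.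
        cmp K X Y Z g f \<in> Hom K X Z) \<and>
     (\<forall>W\<in>Ob K. \<forall>X\<in>Ob K. \<forall>Y\<in>Ob K. \<forall>Z\<in>Ob K.
        \<forall>f\<in>Hom K W X. \<forall>g\<in>Hom K X Y. \<forall>h\<in>Hom K Y Z.
        cmp K W Y Z h (cmp K W X Y g f) = cmp K W X Z (cmp K X Y Z h g) f) \<and>
     (\<forall>X\<in>Ob K. \<forall>Y\<in>Ob K. \<forall>f\<in>Hom K X Y.
        cmp K X Y Y (idt K Y) f = f \<and> cmp K X X Y f (idt K X) = f)"

definition is_preadditive :: "('o,'m,'x) addcat_scheme \<Rightarrow> bool" where
  "is_preadditive K \<longleftrightarrow> is_category K \<and>
     (\<forall>X\<in>Ob K. \<forall>Y\<in>Ob K. ab_grp (Hom K X Y) (zro K X Y) (pls K X Y) (ngt K X Y)) \<and>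
     (\<forall>X\<in>Ob K. \<forall>Y\<in>Ob K. \<forall>Z\<in>Ob K. \<forall>f\<in>Hom K X Y. \<forall>f'\<in>Hom K X Y. \<forall>g\<in>Hom K Y Z. \<forall>g'\<in>Hom K Y Z.
        cmp K X Y Z (pls K Y Z g g') f = pls K X Z (cmp K X Y Z g f) (cmp K X Y Z g' f) \<and>
        cmp K X Y Z g (pls K X Y f f') = pls K X Z (cmp K X Y Z g f) (cmp K X Y Z g f'))"

definition is_additive :: "('o,'m,'x) addcat_scheme \<Rightarrow> bool" where
  "is_additive K \<longleftrightarrow> is_preadditive K \<and>
     (\<exists>Z\<in>Ob K. \<forall>X\<in>Ob K. Hom K Z X = {zro K Z X} \<and> Hom K X Z = {zro K X Z}) \<and>
     (\<forall>X\<in>Ob K. \<forall>Y\<in>Ob K. \<exists>P\<in>Ob K. \<exists>i1\<in>Hom K X P. \<exists>i2\<in>Hom K Y P.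
        \<exists>p1\<in>Hom K P X. \<exists>p2\<in>Hom K P Y.
        cmp K X P X p1 i1 = idt K X \<and> cmp K Y P Y p2 i2 = idt K Y \<and>
        cmp K X P Y p2 i1 = zro K X Y \<and> cmp K Y P X p1 i2 = zro K Y X \<and>
        pls K P P (cmp K P X P i1 p1) (cmp K P Y P i2 p2) = idt K P)"

record ('o,'m,'e) bifun =
  Ev   :: "'o \<Rightarrow> 'o \<Rightarrow> 'e set"          (* Ev C A = E(C,A) *)
  ez   :: "'o \<Rightarrow> 'o \<Rightarrow> 'e"
  ep   :: "'o \<Rightarrow> 'o \<Rightarrow> 'e \<Rightarrow> 'e \<Rightarrow> 'e"
  en   :: "'o \<Rightarrow> 'o \<Rightarrow> 'e \<Rightarrow> 'e"
  push :: "'o \<Rightarrow> 'o \<Rightarrow> 'o \<Rightarrow> 'm \<Rightarrow> 'e \<Rightarrow> 'e"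
    (* push C A B a \<alpha> = a_* \<alpha> = E(C,a)(\<alpha>), for a : A \<rightarrow> B, \<alpha> \<in> E(C,A) *)
  pull :: "'o \<Rightarrow> 'o \<Rightarrow> 'o \<Rightarrow> 'm \<Rightarrow> 'e \<Rightarrow> 'e"
    (* pull C D A c \<beta> = c^* \<beta> = E(c,A)(\<beta>), for c : C \<rightarrow> D, \<beta> \<in> E(D,A) *)

definition is_biadditive_functor :: "('o,'m,'x) addcat_scheme \<Rightarrow> ('o,'m,'e,'y) bifun_scheme \<Rightarrow> bool" where
  "is_biadditive_functor K E \<longleftrightarrow>
     (\<forall>C\<in>Ob K. \<forall>A\<in>Ob K. ab_grp (Ev E C A) (ez E C A) (ep E C A) (en E C A)) \<and>
     \<comment> \<open>covariant part a_*\<close>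
     (\<forall>C\<in>Ob K. \<forall>A\<in>Ob K. \<forall>B\<in>Ob K. \<forall>a\<in>Hom K A B. \<forall>x\<in>Ev E C A.
        push E C A B a x \<in> Ev E C B) \<and>
     (\<forall>C\<in>Ob K. \<forall>A\<in>Ob K. \<forall>B\<in>Ob K. \<forall>a\<in>Hom K A B. \<forall>x\<in>Ev E C A. \<forall>y\<in>Ev E C A.
        push E C A B a (ep E C A x y) = ep E C B (push E C A B a x) (push E C A B a y)) \<and>
     (\<forall>C\<in>Ob K. \<forall>A\<in>Ob K. \<forall>x\<in>Ev E C A. push E C A A (idt K A) x = x) \<and>
     (\<forall>C\<in>Ob K. \<forall>A\<in>Ob K. \<forall>B\<in>Ob K. \<forall>B'\<in>Ob K. \<forall>a\<in>Hom K A B. \<forall>b\<in>Hom K B B'. \<forall>x\<in>Ev E C A.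
        push E C A B' (cmp K A B B' b a) x = push E C B B' b (push E C A B a x)) \<and>
     \<comment> \<open>contravariant part c^*\<close>
     (\<forall>C\<in>Ob K. \<forall>D\<in>Ob K. \<forall>A\<in>Ob K. \<forall>c\<in>Hom K C D. \<forall>x\<in>Ev E D A.
        pull E C D A c x \<in> Ev E C A) \<and>
     (\<forall>C\<in>Ob K. \<forall>D\<in>Ob K. \<forall>A\<in>Ob K. \<forall>c\<in>Hom K C D. \<forall>x\<in>Ev E D A. \<forall>y\<in>Ev E D A.
        pull E C D A c (ep E D A x y) = ep E C A (pull E C D A c x) (pull E C D A c y)) \<and>
     (\<forall>C\<in>Ob K. \<forall>A\<in>Ob K. \<forall>x\<in>Ev E C A. pull E C C A (idt K C) x = x) \<and>
     (\<forall>C\<in>Ob K. \<forall>D\<in>Ob K. \<forall>D'\<in>Ob K. \<forall>A\<in>Ob K. \<forall>c\<in>Hom K C D. \<forall>d\<in>Hom K D D'. \<forall>x\<in>Ev E D' A.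
        pull E C D' A (cmp K C D D' d c) x = pull E C D A c (pull E D D' A d x)) \<and>
     \<comment> \<open>bifunctoriality\<close>
     (\<forall>C\<in>Ob K. \<forall>D\<in>Ob K. \<forall>A\<in>Ob K. \<forall>B\<in>Ob K. \<forall>a\<in>Hom K A B. \<forall>c\<in>Hom K C D. \<forall>x\<in>Ev E D A.
        push E C A B a (pull E C D A c x) = pull E C D B c (push E D A B a x)) \<and>
     \<comment> \<open>biadditivity\<close>
     (\<forall>C\<in>Ob K. \<forall>A\<in>Ob K. \<forall>B\<in>Ob K. \<forall>a\<in>Hom K A B. \<forall>a'\<in>Hom K A B. \<forall>x\<in>Ev E C A.
        push E C A B (pls K A B a a') x = ep E C B (push E C A B a x) (push E C A B a' x)) \<and>
     (\<forall>C\<in>Ob K. \<forall>D\<in>Ob K. \<forall>A\<in>Ob K. \<forall>c\<in>Hom K C D. \<forall>c'\<in>Hom K C D. \<forall>x\<in>Ev E D A.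
        pull E C D A (pls K C D c c') x = ep E C A (pull E C D A c x) (pull E C D A c' x))"

definition splits_in :: "('o,'m,'x) addcat_scheme \<Rightarrow> 'o \<Rightarrow> 'm \<Rightarrow> bool" where
  "splits_in K X e \<longleftrightarrow> (\<exists>Y\<in>Ob K. \<exists>r\<in>Hom K X Y. \<exists>s\<in>Hom K Y X.
       cmp K X Y X s r = e \<and> cmp K Y X Y r s = idt K Y)"

definition idem_complete :: "('o,'m,'x) addcat_scheme \<Rightarrow> bool" where
  "idem_complete K \<longleftrightarrow> (\<forall>X\<in>Ob K. \<forall>e\<in>Hom K X X. cmp K X X X e e = e \<longrightarrow> splits_in K X e)"

definition ext_obj :: "('o,'m,'x) addcat_scheme \<Rightarrow> ('o,'m,'e,'y) bifun_scheme \<Rightarrow> 'o \<times> 'o \<times> 'e \<Rightarrow> bool" where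
  "ext_obj K E X \<longleftrightarrow> (case X of (C, A, \<alpha>) \<Rightarrow> C \<in> Ob K \<and> A \<in> Ob K \<and> \<alpha> \<in> Ev E C A)"

definition ext_hom :: "('o,'m,'x) addcat_scheme \<Rightarrow> ('o,'m,'e,'y) bifun_scheme \<Rightarrow>
    'o \<times> 'o \<times> 'e \<Rightarrow> 'o \<times> 'o \<times> 'e \<Rightarrow> 'm \<times> 'm \<Rightarrow> bool" where
  "ext_hom K E X Y f \<longleftrightarrow> (case X of (C, A, \<alpha>) \<Rightarrow> case Y of (D, B, \<beta>) \<Rightarrow> case f of (a, c) \<Rightarrow>
      a \<in> Hom K A B \<and> c \<in> Hom K C D \<and> push E C A B a \<alpha> = pull E C D B c \<beta>)"

definition ext_cmp :: "('o,'m,'x) addcat_scheme \<Rightarrow>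
    'o \<times> 'o \<times> 'e \<Rightarrow> 'o \<times> 'o \<times> 'e \<Rightarrow> 'o \<times> 'o \<times> 'e \<Rightarrow> 'm \<times> 'm \<Rightarrow> 'm \<times> 'm \<Rightarrow> 'm \<times> 'm" where
  "ext_cmp K X Y Z g f = (case X of (C, A, _) \<Rightarrow> case Y of (D, B, _) \<Rightarrow> case Z of (F, G, _) \<Rightarrow>
      (cmp K A B G (fst g) (fst f), cmp K C D F (snd g) (snd f)))"

definition ext_idt :: "('o,'m,'x) addcat_scheme \<Rightarrow> 'o \<times> 'o \<times> 'e \<Rightarrow> 'm \<times> 'm" where
  "ext_idt K X = (case X of (C, A, _) \<Rightarrow> (idt K A, idt K C))"

definition ext_idempotent :: "('o,'m,'x) addcat_scheme \<Rightarrow> ('o,'m,'e,'y) bifun_scheme \<Rightarrow>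
    'o \<times> 'o \<times> 'e \<Rightarrow> 'm \<times> 'm \<Rightarrow> bool" where
  "ext_idempotent K E X e \<longleftrightarrow> ext_hom K E X X e \<and> ext_cmp K X X X e e = e"

definition ext_splits :: "('o,'m,'x) addcat_scheme \<Rightarrow> ('o,'m,'e,'y) bifun_scheme \<Rightarrow>
    'o \<times> 'o \<times> 'e \<Rightarrow> 'm \<times> 'm \<Rightarrow> bool" where
  "ext_splits K E X e \<longleftrightarrow> (\<exists>Y r s. ext_obj K E Y \<and> ext_hom K E X Y r \<and> ext_hom K E Y X s \<and>
      ext_cmp K X Y X s r = e \<and> ext_cmp K Y X Y r s = ext_idt K Y)"

definition ext_idem_complete :: "('o,'m,'x) addcat_scheme \<Rightarrow> ('o,'m,'e,'y) bifun_scheme \<Rightarrow> bool" where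
  "ext_idem_complete K E \<longleftrightarrow>
     (\<forall>X e. ext_obj K E X \<and> ext_idempotent K E X e \<longrightarrow> ext_splits K E X e)"

end

theory Submission
  imports Defs
begin

text \<open>Given splittings \<open>e\<^sub>A = s\<^sub>A r\<^sub>A\<close> and \<open>e\<^sub>C = s\<^sub>C r\<^sub>C\<close> through \<open>A'\<close> and \<open>C'\<close>, the extension
  \<open>\<beta> = (r\<^sub>A)\<^sub>* (s\<^sub>C)\<^sup>* \<alpha> \<in> \<bbbE>(C', A')\<close> splits \<open>(e\<^sub>A, e\<^sub>C)\<close> via \<open>(r\<^sub>A, r\<^sub>C) : \<alpha> \<rightarrow> \<beta>\<close> and
  \<open>(s\<^sub>A, s\<^sub>C) : \<beta> \<rightarrow> \<alpha>\<close>: both are morphisms of extensions because \<open>(e\<^sub>A)\<^sub>* \<alpha> = (e\<^sub>C)\<^sup>* \<alpha>\<close> and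
  \<open>r\<^sub>A e\<^sub>A = r\<^sub>A\<close>, \<open>e\<^sub>C s\<^sub>C = s\<^sub>C\<close>. Conversely, the components of a splitting in \<open>\<bbbE>-Ext(\<C>)\<close>
  are splittings in \<open>\<C>\<close>.\<close>

lemma cat_cmp_closed:
  assumes "is_category K" "X \<in> Ob K" "Y \<in> Ob K" "Z \<in> Ob K" "f \<in> Hom K X Y" "g \<in> Hom K Y Z"
  shows "cmp K X Y Z g f \<in> Hom K X Z"
  using assms unfolding is_category_def by (elim conjE) auto

lemma cat_cmp_assoc:
  assumes "is_category K" "W \<in> Ob K" "X \<in> Ob K" "Y \<in> Ob K" "Z \<in> Ob K"
    and "f \<in> Hom K W X" "g \<in> Hom K X Y" "h \<in> Hom K Y Z"
  shows "cmp K W Y Z h (cmp K W X Y g f) = cmp K W X Z (cmp K X Y Z h g) f"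
  using assms unfolding is_category_def by (elim conjE) auto

lemma cat_cmp_id_left:
  assumes "is_category K" "X \<in> Ob K" "Y \<in> Ob K" "f \<in> Hom K X Y"
  shows "cmp K X Y Y (idt K Y) f = f"
  using assms unfolding is_category_def by (elim conjE) auto

lemma cat_cmp_id_right:
  assumes "is_category K" "X \<in> Ob K" "Y \<in> Ob K" "f \<in> Hom K X Y"
  shows "cmp K X X Y f (idt K X) = f"
  using assms unfolding is_category_def by (elim conjE) auto

lemma is_additive_imp_is_category: "is_additive K \<Longrightarrow> is_category K"
  unfolding is_additive_def is_preadditive_def by blast

lemma bifun_push_closed:
  assumes "is_biadditive_functor K E" "C \<in> Ob K" "A \<in> Ob K" "B \<in> Ob K"
    and "a \<in> Hom K A B" "x \<in> Ev E C A"
  shows "push E C A B a x \<in> Ev E C B"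
  using assms unfolding is_biadditive_functor_def by (elim conjE) auto

lemma bifun_pull_closed:
  assumes "is_biadditive_functor K E" "C \<in> Ob K" "D \<in> Ob K" "A \<in> Ob K"
    and "c \<in> Hom K C D" "x \<in> Ev E D A"
  shows "pull E C D A c x \<in> Ev E C A"
  using assms unfolding is_biadditive_functor_def by (elim conjE) auto

lemma bifun_push_cmp:
  assumes "is_biadditive_functor K E" "C \<in> Ob K" "A \<in> Ob K" "B \<in> Ob K" "B' \<in> Ob K"
    and "a \<in> Hom K A B" "b \<in> Hom K B B'" "x \<in> Ev E C A"
  shows "push E C A B' (cmp K A B B' b a) x = push E C B B' b (push E C A B a x)"
  using assms unfolding is_biadditive_functor_def by (elim conjE) auto

lemma bifun_pull_cmp:
  assumes "is_biadditive_functor K E" "C \<in> Ob K" "D \<in> Ob K" "D' \<in> Ob K" "A \<in> Ob K"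
    and "c \<in> Hom K C D" "d \<in> Hom K D D'" "x \<in> Ev E D' A"
  shows "pull E C D' A (cmp K C D D' d c) x = pull E C D A c (pull E D D' A d x)"
  using assms unfolding is_biadditive_functor_def by (elim conjE) auto

lemma bifun_push_pull:
  assumes "is_biadditive_functor K E" "C \<in> Ob K" "D \<in> Ob K" "A \<in> Ob K" "B \<in> Ob K"
    and "a \<in> Hom K A B" "c \<in> Hom K C D" "x \<in> Ev E D A"
  shows "push E C A B a (pull E C D A c x) = pull E C D B c (push E D A B a x)"
  using assms unfolding is_biadditive_functor_def by (elim conjE) auto

lemma splitting_retraction_cmp_idem:
  assumes "is_category K" "X \<in> Ob K" "Y \<in> Ob K" "r \<in> Hom K X Y" "s \<in> Hom K Y X"
    and "cmp K X Y X s r = e" "cmp K Y X Y r s = idt K Y"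
  shows "cmp K X X Y r e = r"
proof -
  have "cmp K X X Y r e = cmp K X Y Y (cmp K Y X Y r s) r"
    using assms cat_cmp_assoc by metis
  then show ?thesis
    using assms cat_cmp_id_left by metis
qed

lemma splitting_idem_cmp_section:
  assumes "is_category K" "X \<in> Ob K" "Y \<in> Ob K" "r \<in> Hom K X Y" "s \<in> Hom K Y X"
    and "cmp K X Y X s r = e" "cmp K Y X Y r s = idt K Y"
  shows "cmp K Y X X e s = s"
proof -
  have "cmp K Y X X e s = cmp K Y Y X s (cmp K Y X Y r s)"
    using assms cat_cmp_assoc by metis
  then show ?thesis
    using assms cat_cmp_id_right by metis
qed

lemma ext_splits_if_components_split:
  assumes cat: "is_category K" and bf: "is_biadditive_functor K E"
    and C: "C \<in> Ob K" and A: "A \<in> Ob K" and \<alpha>: "\<alpha> \<in> Ev E C A"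
    and idem: "ext_idempotent K E (C, A, \<alpha>) (eA, eC)"
    and "splits_in K A eA" "splits_in K C eC"
  shows "ext_splits K E (C, A, \<alpha>) (eA, eC)"
proof -
  obtain A' rA sA where A': "A' \<in> Ob K" and rA: "rA \<in> Hom K A A'" and sA: "sA \<in> Hom K A' A"
    and sArA: "cmp K A A' A sA rA = eA" and rAsA: "cmp K A' A A' rA sA = idt K A'"
    using \<open>splits_in K A eA\<close> unfolding splits_in_def by blast
  obtain C' rC sC where C': "C' \<in> Ob K" and rC: "rC \<in> Hom K C C'" and sC: "sC \<in> Hom K C' C"
    and sCrC: "cmp K C C' C sC rC = eC" and rCsC: "cmp K C' C C' rC sC = idt K C'"
    using \<open>splits_in K C eC\<close> unfolding splits_in_def by blast
  have eA: "eA \<in> Hom K A A" and eC: "eC \<in> Hom K C C"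
    and e_morph: "push E C A A eA \<alpha> = pull E C C A eC \<alpha>"
    using idem unfolding ext_idempotent_def ext_hom_def by auto
  note bifun = bifun_push_closed[OF bf] bifun_pull_closed[OF bf]
    bifun_push_cmp[OF bf] bifun_pull_cmp[OF bf] bifun_push_pull[OF bf]
  define \<beta> where "\<beta> = push E C' A A' rA (pull E C' C A sC \<alpha>)"
  have \<beta>: "\<beta> \<in> Ev E C' A'"
    unfolding \<beta>_def using bifun A A' C C' rA sC \<alpha> by blast
  have r_morph: "push E C A A' rA \<alpha> = pull E C C' A' rC \<beta>"
  proof -
    have "pull E C C' A' rC \<beta> = push E C A A' rA (pull E C C A (cmp K C C' C sC rC) \<alpha>)"
      unfolding \<beta>_def using bifun A A' C C' rA rC sC \<alpha> by metis
    also have "\<dots> = push E C A A' rA (push E C A A eA \<alpha>)"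
      using sCrC e_morph by simp
    also have "\<dots> = push E C A A' (cmp K A A A' rA eA) \<alpha>"
      using bifun A A' C rA eA \<alpha> by metis
    also have "\<dots> = push E C A A' rA \<alpha>"
      using splitting_retraction_cmp_idem[OF cat A A' rA sA sArA rAsA] by simp
    finally show ?thesis by (rule sym)
  qed
  have s_morph: "push E C' A' A sA \<beta> = pull E C' C A sC \<alpha>"
  proof -
    have "push E C' A' A sA \<beta> = push E C' A A (cmp K A A' A sA rA) (pull E C' C A sC \<alpha>)"
      unfolding \<beta>_def using bifun A A' C C' rA sA sC \<alpha> by metis
    also have "\<dots> = pull E C' C A sC (pull E C C A eC \<alpha>)"
      using sArA e_morph bifun A C C' sC eA \<alpha> by metis
    also have "\<dots> = pull E C' C A (cmp K C' C C eC sC) \<alpha>"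
      using bifun A C C' sC eC \<alpha> by metis
    also have "\<dots> = pull E C' C A sC \<alpha>"
      using splitting_idem_cmp_section[OF cat C C' rC sC sCrC rCsC] by simp
    finally show ?thesis .
  qed
  show ?thesis
    unfolding ext_splits_def
    using C' A' \<beta> rA rC sA sC r_morph s_morph sArA sCrC rAsA rCsC
    by (intro exI[of _ "(C', A', \<beta>)"] exI[of _ "(rA, rC)"] exI[of _ "(sA, sC)"])
       (simp add: ext_obj_def ext_hom_def ext_cmp_def ext_idt_def)
qed

lemma components_split_if_ext_splits:
  assumes "ext_splits K E (C, A, \<alpha>) (eA, eC)"
  shows "splits_in K A eA \<and> splits_in K C eC"
proof -
  obtain Y r s where "ext_obj K E Y" "ext_hom K E (C, A, \<alpha>) Y r" "ext_hom K E Y (C, A, \<alpha>) s"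
    "ext_cmp K (C, A, \<alpha>) Y (C, A, \<alpha>) s r = (eA, eC)" "ext_cmp K Y (C, A, \<alpha>) Y r s = ext_idt K Y"
    using assms unfolding ext_splits_def by blast
  then show ?thesis
    by (cases Y; cases r; cases s)
       (auto simp: splits_in_def ext_obj_def ext_hom_def ext_cmp_def ext_idt_def)
qed

lemma ext_splits_iff_components_split:
  assumes "is_category K" "is_biadditive_functor K E"
    and "C \<in> Ob K" "A \<in> Ob K" "\<alpha> \<in> Ev E C A"
    and "ext_idempotent K E (C, A, \<alpha>) (eA, eC)"
  shows "splits_in K A eA \<and> splits_in K C eC \<longleftrightarrow> ext_splits K E (C, A, \<alpha>) (eA, eC)"
  using ext_splits_if_components_split[OF assms] components_split_if_ext_splits[of K E C A \<alpha> eA eC]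
  by blast

lemma ext_idempotent_components:
  assumes "ext_idempotent K E (C, A, \<alpha>) (eA, eC)"
  shows "eA \<in> Hom K A A" "cmp K A A A eA eA = eA" "eC \<in> Hom K C C" "cmp K C C C eC eC = eC"
  using assms unfolding ext_idempotent_def ext_hom_def ext_cmp_def by auto

lemma idem_complete_imp_ext_idem_complete:
  assumes "is_category K" "is_biadditive_functor K E" "idem_complete K"
  shows "ext_idem_complete K E"
  unfolding ext_idem_complete_def
proof (intro allI impI; elim conjE)
  fix X e
  assume X: "ext_obj K E X" and idem: "ext_idempotent K E X e"
  obtain C A \<alpha> eA eC where X_def: "X = (C, A, \<alpha>)" and e_def: "e = (eA, eC)"
    by (cases X, cases e) auto
  have obs: "C \<in> Ob K" "A \<in> Ob K" "\<alpha> \<in> Ev E C A"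
    using X unfolding X_def ext_obj_def by auto
  have "splits_in K A eA" "splits_in K C eC"
    using ext_idempotent_components[OF idem[unfolded X_def e_def]] obs \<open>idem_complete K\<close>
    unfolding idem_complete_def by auto
  then show "ext_splits K E X e"
    using ext_splits_if_components_split[OF assms(1,2) obs] idem unfolding X_def e_def by blast
qed

theorem proposition4p1:
  fixes K :: "('o,'m) addcat" and E :: "('o,'m,'e) bifun"
  assumes "is_additive K"
    and "is_biadditive_functor K E"
    and "C \<in> Ob K" and "A \<in> Ob K" and "\<alpha> \<in> Ev E C A"
    and "ext_idempotent K E (C, A, \<alpha>) (eA, eC)"
  shows "(splits_in K A eA \<and> splits_in K C eC \<longleftrightarrow> ext_splits K E (C, A, \<alpha>) (eA, eC))
         \<and> (idem_complete K \<longrightarrow> ext_idem_complete K E)"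
proof -
  have cat: "is_category K"
    using \<open>is_additive K\<close> by (rule is_additive_imp_is_category)
  show ?thesis
    using ext_splits_iff_components_split[OF cat assms(2-6)]
      idem_complete_imp_ext_idem_complete[OF cat assms(2)] by blast
qed

end
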